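(* Let $\Gamma=(V,E)$ be a distance-transitive graph on $V=\{1,\dots,n\}$ and let $(u_{ij})_{1\le i,j\le n}$ be the generators of $C(G_{aut}^+(\Gamma))$. Let $j_1,l_1\in V$ and put $m:=d(j_1,l_1)$. Suppose that $u_{aj_1}u_{bl_1}=u_{bl_1}u_{aj_1}$ for all $a,b\in V$ with $d(a,b)=m$. Then $u_{ij}u_{kl}=u_{kl}u_{ij}$ for all $i,j,k,l\in V$ with $d(i,k)=d(j,l)=m$.
   Context: $\Gamma$ is a finite simple connected undirected graph with vertex set $V=\{1,\dots,n\}$ and edge set $E$; $d$ is the graph distance. An automorphism of $\Gamma$ is a bijection $\sigma:V\to V$ with $(i,j)\in E\iff(\sigma(i),\sigma(j))\in E$. $\Gamma$ is distance-transitive if it is regular and for all pairs $(i,k),(j,l)$ of vertices with $d(i,k)=d(j,l)$ there is an automorphism $\phi$ with $\phi(i)=j$, $\phi(k)=l$. $C(G_{aut}^+(\Gamma))$ is the universal unital $C^*$-algebra generated by $u_{ij}$, $1\le i,j\le n$, with relations: (R1) $u_{ij}=u_{ij}^*=u_{ij}^2$; (R2) $\sum_{l} u_{il}=1=\sum_{l} u_{li}$ for all $i$; (R3) $u_{ij}u_{kl}=u_{kl}u_{ij}=0$ whenever exactly one of $(i,k)\in E$, $(j,l)\in E$ holds. *)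

theory Defs
  imports Complex_Main
begin

class cstar_algebra = real_normed_algebra_1 + banach +
  fixes scaleC :: "complex \<Rightarrow> 'a \<Rightarrow> 'a"
    and cstar :: "'a \<Rightarrow> 'a"
  assumes scaleC_of_real: "scaleC (complex_of_real r) x = scaleR r x"
    and scaleC_add_right: "scaleC a (x + y) = scaleC a x + scaleC a y"
    and scaleC_add_left: "scaleC (a + b) x = scaleC a x + scaleC b x"
    and scaleC_scaleC: "scaleC a (scaleC b x) = scaleC (a * b) x"
    and norm_scaleC: "norm (scaleC a x) = cmod a * norm x"
    and mult_scaleC_left: "scaleC a x * y = scaleC a (x * y)"
    and mult_scaleC_right: "x * scaleC a y = scaleC a (x * y)"
    and cstar_cstar: "cstar (cstar x) = x"
    and cstar_add: "cstar (x + y) = cstar x + cstar y"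
    and cstar_mult: "cstar (x * y) = cstar y * cstar x"
    and cstar_scaleC: "cstar (scaleC a x) = scaleC (cnj a) (cstar x)"
    and cstar_identity: "norm (cstar x * x) = (norm x)\<^sup>2"

definition unital_star_hom :: "('a::cstar_algebra \<Rightarrow> 'b::cstar_algebra) \<Rightarrow> bool" where
  "unital_star_hom h \<longleftrightarrow>
     (\<forall>x y. h (x + y) = h x + h y) \<and>
     (\<forall>x y. h (x * y) = h x * h y) \<and>
     (\<forall>a x. h (scaleC a x) = scaleC a (h x)) \<and>
     (\<forall>x. h (cstar x) = cstar (h x)) \<and>
     h 1 = 1"

definition simple_graph :: "(nat \<Rightarrow> nat \<Rightarrow> bool) \<Rightarrow> nat \<Rightarrow> bool" where
  "simple_graph E n \<longleftrightarrow>
     (\<forall>i j. E i j \<longrightarrow> i \<in> {1..n} \<and> j \<in> {1..n}) \<and>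
     (\<forall>i j. E i j \<longrightarrow> E j i) \<and> (\<forall>i. \<not> E i i)"

definition gdist :: "(nat \<Rightarrow> nat \<Rightarrow> bool) \<Rightarrow> nat \<Rightarrow> nat \<Rightarrow> nat" where
  "gdist E i k = (LEAST m. (E ^^ m) i k)"

definition connected_graph :: "(nat \<Rightarrow> nat \<Rightarrow> bool) \<Rightarrow> nat \<Rightarrow> bool" where
  "connected_graph E n \<longleftrightarrow> (\<forall>i\<in>{1..n}. \<forall>k\<in>{1..n}. \<exists>m. (E ^^ m) i k)"

definition graph_aut :: "(nat \<Rightarrow> nat \<Rightarrow> bool) \<Rightarrow> nat \<Rightarrow> (nat \<Rightarrow> nat) \<Rightarrow> bool" where
  "graph_aut E n \<sigma> \<longleftrightarrow> bij_betw \<sigma> {1..n} {1..n} \<and>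
     (\<forall>i\<in>{1..n}. \<forall>j\<in>{1..n}. E i j \<longleftrightarrow> E (\<sigma> i) (\<sigma> j))"

definition regular_graph :: "(nat \<Rightarrow> nat \<Rightarrow> bool) \<Rightarrow> nat \<Rightarrow> bool" where
  "regular_graph E n \<longleftrightarrow> (\<exists>r. \<forall>i\<in>{1..n}. card {j\<in>{1..n}. E i j} = r)"

definition distance_transitive :: "(nat \<Rightarrow> nat \<Rightarrow> bool) \<Rightarrow> nat \<Rightarrow> bool" where
  "distance_transitive E n \<longleftrightarrow> regular_graph E n \<and>
     (\<forall>i\<in>{1..n}. \<forall>k\<in>{1..n}. \<forall>j\<in>{1..n}. \<forall>l\<in>{1..n}.
        gdist E i k = gdist E j l \<longrightarrow> (\<exists>\<phi>. graph_aut E n \<phi> \<and> \<phi> i = j \<and> \<phi> k = l))"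

definition qaut_relations :: "(nat \<Rightarrow> nat \<Rightarrow> bool) \<Rightarrow> nat \<Rightarrow> (nat \<Rightarrow> nat \<Rightarrow> 'a::cstar_algebra) \<Rightarrow> bool" where
  "qaut_relations E n u \<longleftrightarrow>
     (\<forall>i\<in>{1..n}. \<forall>j\<in>{1..n}. cstar (u i j) = u i j \<and> u i j * u i j = u i j) \<and>
     (\<forall>i\<in>{1..n}. (\<Sum>l\<in>{1..n}. u i l) = 1 \<and> (\<Sum>l\<in>{1..n}. u l i) = 1) \<and>
     (\<forall>i\<in>{1..n}. \<forall>j\<in>{1..n}. \<forall>k\<in>{1..n}. \<forall>l\<in>{1..n}.
        E i k \<noteq> E j l \<longrightarrow> u i j * u k l = 0 \<and> u k l * u i j = 0)"

text \<open>(A, u) is the universal unital C*-algebra C(G_aut^+(Gamma)) with generators u: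
  u satisfies the relations, and for every family v satisfying the relations (in a
  C*-algebra of the same type) there is a unique unital *-homomorphism sending u to v.
  (HOL cannot quantify over all types inside a formula.)\<close>

definition is_C_Gaut_plus :: "(nat \<Rightarrow> nat \<Rightarrow> bool) \<Rightarrow> nat \<Rightarrow> (nat \<Rightarrow> nat \<Rightarrow> 'a::cstar_algebra) \<Rightarrow> bool" where
  "is_C_Gaut_plus E n u \<longleftrightarrow> qaut_relations E n u \<and>
     (\<forall>v :: nat \<Rightarrow> nat \<Rightarrow> 'a. qaut_relations E n v \<longrightarrow>
        (\<exists>!h. unital_star_hom h \<and> (\<forall>i\<in>{1..n}. \<forall>j\<in>{1..n}. h (u i j) = v i j)))"

end

theory Submission
  imports Defs
begin

text \<open>Choose a graph automorphism \<psi> with \<psi> j1 = j and \<psi> l1 = l (distance transitivity).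
  Permuting the columns of u by \<psi> preserves the defining relations, so the universal property
  yields a *-endomorphism h with h (u a b) = u a (\<psi> b). Applying h to the commutation
  u i j1 * u k l1 = u k l1 * u i j1 gives u i j * u k l = u k l * u i j.\<close>

lemma graph_aut_maps_into:
  assumes "graph_aut E n \<psi>" and "b \<in> {1..n}"
  shows "\<psi> b \<in> {1..n}"
  using assms bij_betwE unfolding graph_aut_def by blast

lemma qaut_relations_permute_columns:
  assumes aut: "graph_aut E n \<psi>" and rel: "qaut_relations E n u"
  shows "qaut_relations E n (\<lambda>a b. u a (\<psi> b))"
  unfolding qaut_relations_def
proof (intro conjI ballI impI)
  have bij: "bij_betw \<psi> {1..n} {1..n}" and adj: "\<forall>a\<in>{1..n}. \<forall>b\<in>{1..n}. E a b \<longleftrightarrow> E (\<psi> a) (\<psi> b)"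
    using aut unfolding graph_aut_def by auto
  note into = graph_aut_maps_into[OF aut]
  {
    fix a b assume "a \<in> {1..n}" "b \<in> {1..n}"
    then show "cstar (u a (\<psi> b)) = u a (\<psi> b)" "u a (\<psi> b) * u a (\<psi> b) = u a (\<psi> b)"
      using rel into unfolding qaut_relations_def by auto
  next
    fix a assume a: "a \<in> {1..n}"
    have "(\<Sum>b\<in>{1..n}. u a (\<psi> b)) = (\<Sum>b\<in>{1..n}. u a b)"
      using sum.reindex_bij_betw[OF bij, of "u a"] .
    then show "(\<Sum>b\<in>{1..n}. u a (\<psi> b)) = 1"
      using rel a unfolding qaut_relations_def by auto
    show "(\<Sum>b\<in>{1..n}. u b (\<psi> a)) = 1"
      using rel a into unfolding qaut_relations_def by auto
  next
    fix a b c e assume abce: "a \<in> {1..n}" "b \<in> {1..n}" "c \<in> {1..n}" "e \<in> {1..n}"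
      and "E a c \<noteq> E b e"
    then have "E a c \<noteq> E (\<psi> b) (\<psi> e)" using adj by auto
    then show "u a (\<psi> b) * u c (\<psi> e) = 0" "u c (\<psi> e) * u a (\<psi> b) = 0"
      using rel abce into unfolding qaut_relations_def by blast+
  }
qed

lemma is_C_Gaut_plus_column_endomorphism:
  assumes "is_C_Gaut_plus E n u" and "graph_aut E n \<psi>"
  obtains h where "unital_star_hom h" and "\<forall>a\<in>{1..n}. \<forall>b\<in>{1..n}. h (u a b) = u a (\<psi> b)"
proof -
  have "qaut_relations E n u"
    using assms(1) unfolding is_C_Gaut_plus_def by blast
  then have "qaut_relations E n (\<lambda>a b. u a (\<psi> b))"
    using qaut_relations_permute_columns[OF assms(2)] by blast
  then show thesis
    using assms(1) that unfolding is_C_Gaut_plus_def by blast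
qed

lemma commute_via_column_endomorphism:
  assumes "unital_star_hom h" and "\<forall>a\<in>{1..n}. \<forall>b\<in>{1..n}. h (u a b) = u a (\<psi> b)"
    and "i \<in> {1..n}" "k \<in> {1..n}" "j \<in> {1..n}" "l \<in> {1..n}"
    and "u i j * u k l = u k l * u i j"
  shows "u i (\<psi> j) * u k (\<psi> l) = u k (\<psi> l) * u i (\<psi> j)"
proof -
  have mult: "\<And>x y. h (x * y) = h x * h y"
    using assms(1) unfolding unital_star_hom_def by blast
  have "h (u i j * u k l) = h (u k l * u i j)"
    using assms(7) by simp
  then show ?thesis
    using assms(2-6) unfolding mult by simp
qed

theorem lemma3p3:
  fixes E :: "nat \<Rightarrow> nat \<Rightarrow> bool" and n :: nat
    and u :: "nat \<Rightarrow> nat \<Rightarrow> 'a::cstar_algebra" and j1 l1 :: nat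
  assumes "simple_graph E n" and "connected_graph E n" and "distance_transitive E n"
    and "is_C_Gaut_plus E n u"
    and "j1 \<in> {1..n}" and "l1 \<in> {1..n}"
    and "\<forall>a\<in>{1..n}. \<forall>b\<in>{1..n}. gdist E a b = gdist E j1 l1 \<longrightarrow>
           u a j1 * u b l1 = u b l1 * u a j1"
  shows "\<forall>i\<in>{1..n}. \<forall>j\<in>{1..n}. \<forall>k\<in>{1..n}. \<forall>l\<in>{1..n}.
           gdist E i k = gdist E j1 l1 \<and> gdist E j l = gdist E j1 l1 \<longrightarrow>
           u i j * u k l = u k l * u i j"
proof (intro ballI impI)
  fix i j k l assume V: "i \<in> {1..n}" "j \<in> {1..n}" "k \<in> {1..n}" "l \<in> {1..n}"
    and dist: "gdist E i k = gdist E j1 l1 \<and> gdist E j l = gdist E j1 l1"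
  obtain \<psi> where aut: "graph_aut E n \<psi>" and "\<psi> j1 = j" and "\<psi> l1 = l"
    using assms(3,5,6) V dist unfolding distance_transitive_def by metis
  obtain h where h: "unital_star_hom h" "\<forall>a\<in>{1..n}. \<forall>b\<in>{1..n}. h (u a b) = u a (\<psi> b)"
    using is_C_Gaut_plus_column_endomorphism[OF assms(4) aut] .
  have "u i j1 * u k l1 = u k l1 * u i j1"
    using assms(7) V dist by blast
  from commute_via_column_endomorphism[OF h V(1,3) assms(5,6) this]
  show "u i j * u k l = u k l * u i j"
    using \<open>\<psi> j1 = j\<close> \<open>\<psi> l1 = l\<close> by simp
qed

end
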